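(* Let $p\in(0,1)$, $q=1-p$, and let $X_1$ be a random variable with ${\sf P}(X_1=\sqrt{q/p})=p$, ${\sf P}(X_1=-\sqrt{p/q})=q$. Let $\Phi$ be the standard normal distribution function. Then $$\Delta_1(p):=\sup_{x\in\mathbb R}\big|{\sf P}(X_1<x)-\Phi(x)\big|=\begin{cases}\Phi(\sqrt{p/q})-p,&0<p<\frac12,\\ \Phi(\sqrt{q/p})-q,&\frac12\le p<1.\end{cases}$$ *)

theory Defs
  imports "HOL-Probability.Probability"
begin

definition Phi :: "real \<Rightarrow> real" where
  "Phi x = cdf (density lborel std_normal_density) x"

end

theory Submission
  imports Defs
begin

text \<open>The variable \<open>X\<close> takes the values \<open>u = - sqrt (p/q)\<close> and \<open>v = sqrt (q/p)\<close>,
  so \<open>x \<mapsto> P(X < x)\<close> is a step function with jumps \<open>q\<close> at \<open>u\<close> and \<open>p\<close> at \<open>v\<close>.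
  Against any right-continuous distribution function \<open>G\<close>, the supremum of the deviation is
  the largest of the four one-sided deviations at \<open>u\<close> and \<open>v\<close>.  Since \<open>u * v = -1\<close>,
  with \<open>t = min (sqrt (p/q)) (sqrt (q/p)) \<le> 1\<close> these four numbers are, for \<open>G = Phi\<close>,
  \<open>1 - Phi t\<close>, \<open>Phi t - t\<^sup>2/(1+t\<^sup>2)\<close>, \<open>Phi (1/t) - 1/(1+t\<^sup>2)\<close> and
  \<open>1 - Phi (1/t)\<close>, and the second one is the largest.  This comes down to two crude bounds
  on the normal density: \<open>3/10 * (1 - s\<^sup>2/2)\<close> from below on \<open>[-t, t]\<close>, and
  \<open>11/20\<close> times the derivative of \<open>arctan\<close> from above on \<open>[t, 1/t]\<close>.\<close>

lemma continuous_on_std_normal_density: "continuous_on S std_normal_density"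
  unfolding normal_density_def by (intro continuous_intros) auto

interpretation std_normal: real_distribution std_normal_distribution
  by (rule real_dist_normal_dist)

lemma Phi_mono: "x \<le> y \<Longrightarrow> Phi x \<le> Phi y"
  unfolding Phi_def by (rule std_normal.cdf_nondecreasing)

lemma Phi_has_integral:
  assumes "x \<le> y"
  shows "(std_normal_density has_integral (Phi y - Phi x)) {x..y}"
proof (cases "x = y")
  case False
  define I where "I = integral {x..y} std_normal_density"
  have I: "(std_normal_density has_integral I) {x..y}"
    unfolding I_def
    by (intro integrable_integral integrable_continuous_interval continuous_on_std_normal_density)
  have "(std_normal_density has_integral I) {x<..y}"
    using I
    by (subst has_integral_spike_set_eq[OF empty_imp_negligible negligible_subset[OF negligible_sing]])
      auto
  then have "emeasure std_normal_distribution {x<..y} = ennreal I"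
    by (simp add: emeasure_density nn_integral_has_integral_lebesgue')
  then have "measure std_normal_distribution {x<..y} = I"
    using has_integral_nonneg[OF I] by (simp add: measure_def)
  moreover have "Phi y - Phi x = measure std_normal_distribution {x<..y}"
    unfolding Phi_def using False assms by (intro std_normal.cdf_diff_eq) simp
  ultimately show ?thesis using I by simp
qed (simp add: has_integral_refl)

lemma Phi_uminus: "Phi (- x) = 1 - Phi x"
proof -
  have step: "Phi y + Phi (- y) = Phi z + Phi (- z)" if "y \<le> z" for y z
  proof -
    have "(\<lambda>s. std_normal_density (- s)) = std_normal_density"
      by (rule ext) (simp add: std_normal_density_def)
    then have "(std_normal_density has_integral (Phi (- y) - Phi (- z))) {y..z}"
      using has_integral_reflect_real[of std_normal_density _ z y] Phi_has_integral[of "-z" "-y"] that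
      by simp
    then show ?thesis
      using has_integral_unique[OF Phi_has_integral[OF that]] by fastforce
  qed
  have const: "Phi y + Phi (- y) = Phi x + Phi (- x)" for y
  proof (cases "x \<le> y")
    case True
    from step[OF this] show ?thesis by simp
  next
    case False
    then have "y \<le> x" by simp
    from step[OF this] show ?thesis by simp
  qed
  have "((\<lambda>y. Phi y + Phi (- y)) \<longlongrightarrow> 1 + 0) at_top"
  proof (rule tendsto_add)
    show "(Phi \<longlongrightarrow> 1) at_top"
      unfolding Phi_def[abs_def] by (rule std_normal.cdf_lim_at_top_prob)
    have "(Phi \<longlongrightarrow> 0) at_bot"
      unfolding Phi_def[abs_def] by (rule std_normal.cdf_lim_at_bot)
    then show "((\<lambda>y. Phi (- y)) \<longlongrightarrow> 0) at_top"
      using filterlim_compose filterlim_uminus_at_bot_at_top by blast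
  qed
  moreover have "(\<lambda>y. Phi y + Phi (- y)) = (\<lambda>_. Phi x + Phi (- x))"
    by (intro ext const)
  ultimately have "Phi x + Phi (- x) = 1"
    by (simp add: tendsto_const_iff)
  then show ?thesis by simp
qed

lemma sqrt_2pi_ge: "5/2 \<le> sqrt (2 * pi)"
  by (rule real_le_rsqrt) (use pi_approx in \<open>simp add: power2_eq_square\<close>)

lemma sqrt_2pi_le: "sqrt (2 * pi) \<le> 10/3"
proof -
  have "sqrt (2 * pi) \<le> sqrt ((10/3)\<^sup>2)"
    using pi_approx by (simp add: power2_eq_square)
  then show ?thesis by simp
qed

lemma std_normal_density_le: "std_normal_density s \<le> (11/20) / (1 + s\<^sup>2)"
proof -
  define u where "u = s\<^sup>2 / 2"
  have "0 \<le> u" unfolding u_def by simp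
  then have exp_ge: "(1 + u/2)\<^sup>2 \<le> exp u"
    using exp_ge_one_plus_x_over_n_power_n[of 2 u] by simp
  have "1 + 2*u \<le> 11/8 * (1 + u/2)\<^sup>2"
    using zero_le_power2[of "u - 10/11"] by (simp add: power2_eq_square field_simps)
  also have "\<dots> \<le> 11/20 * sqrt (2*pi) * exp u"
    using sqrt_2pi_ge exp_ge by (intro mult_mono) auto
  finally have "1 + s\<^sup>2 \<le> 11/20 * sqrt (2*pi) * exp (s\<^sup>2/2)"
    unfolding u_def by simp
  then show ?thesis
    unfolding std_normal_density_def by (simp add: field_simps exp_minus add_pos_nonneg)
qed

lemma std_normal_density_ge: "3/10 * (1 - s\<^sup>2/2) \<le> std_normal_density s"
proof (cases "s\<^sup>2 \<le> 2")
  case True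
  have "3/10 * (1 - s\<^sup>2/2) \<le> 1 / sqrt (2*pi) * (1 - s\<^sup>2/2)"
    using sqrt_2pi_le True by (intro mult_right_mono) (auto simp: field_simps)
  also have "\<dots> \<le> 1 / sqrt (2*pi) * exp (- s\<^sup>2/2)"
    using exp_ge_add_one_self[of "- s\<^sup>2/2"] by (intro mult_left_mono) auto
  finally show ?thesis unfolding std_normal_density_def .
next
  case False
  then have "3/10 * (1 - s\<^sup>2/2) \<le> 0" by simp
  then show ?thesis using normal_density_nonneg[of 0 1 s] by linarith
qed

lemma sin_ge_cubic:
  fixes x :: real
  assumes "0 \<le> x"
  shows "x - x^3/6 \<le> sin x"
proof -
  have "\<bar>sin x - (\<Sum>m<3. sin_coeff m * x ^ m)\<bar> \<le> inverse (fact 3) * \<bar>x\<bar> ^ 3"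
    by (rule Maclaurin_sin_bound)
  moreover have "(\<Sum>m<3. sin_coeff m * x ^ m) = x"
    by (simp add: sin_coeff_def eval_nat_numeral)
  ultimately have "\<bar>sin x - x\<bar> \<le> x^3/6"
    using assms by (simp add: fact_numeral)
  then show ?thesis by linarith
qed

lemma Phi_inverse_minus_Phi_le:
  assumes "0 < t" "t \<le> 1"
  shows "Phi (1/t) - Phi t \<le> (1 - t\<^sup>2) / (1 + t\<^sup>2)"
proof -
  define \<alpha> where "\<alpha> = pi/2 - 2 * arctan t"
  have t_le: "t \<le> 1/t"
    using assms by (simp add: field_simps) (metis mult_le_one less_imp_le)
  have arctan_integral: "((\<lambda>s. 11/20 * inverse (1 + s\<^sup>2)) has_integral
      (11/20 * arctan (1/t) - 11/20 * arctan t)) {t..1/t}"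
    by (intro fundamental_theorem_of_calculus[OF t_le] has_field_derivative_at_within
        [THEN has_real_derivative_iff_has_vector_derivative[THEN iffD1]] DERIV_cmult DERIV_arctan)
  have arctan_inverse_t: "arctan (1/t) = pi/2 - arctan t"
    using arctan_inverse[of t] assms by (simp add: inverse_eq_divide)
  have "Phi (1/t) - Phi t \<le> 11/20 * arctan (1/t) - 11/20 * arctan t"
  proof (rule has_integral_le[OF Phi_has_integral[OF t_le] arctan_integral])
    show "std_normal_density s \<le> 11/20 * inverse (1 + s\<^sup>2)" for s
      using std_normal_density_le[of s] by (simp only: divide_inverse)
  qed
  also have "\<dots> = 11/20 * \<alpha>"
    unfolding \<alpha>_def arctan_inverse_t by (simp add: field_simps)
  also have "\<dots> \<le> sin \<alpha>"
  proof -
    have "0 \<le> arctan t" "arctan t \<le> pi/4"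
      using assms arctan_le_iff[of 0 t] arctan_le_iff[of t 1] arctan_one by simp_all
    moreover have "pi \<le> 16/5"
      using pi_approx by simp
    ultimately have "0 \<le> \<alpha>" "\<alpha> \<le> 8/5"
      unfolding \<alpha>_def by linarith+
    then have "\<alpha> * \<alpha>\<^sup>2 \<le> \<alpha> * (8/5)\<^sup>2"
      by (intro mult_left_mono power_mono) auto
    then have "\<alpha>^3 \<le> 64/25 * \<alpha>"
      by (simp add: power2_eq_square power3_eq_cube)
    then have "11/20 * \<alpha> \<le> \<alpha> - \<alpha>^3/6"
      using \<open>0 \<le> \<alpha>\<close> by linarith
    also have "\<dots> \<le> sin \<alpha>"
      using \<open>0 \<le> \<alpha>\<close> by (rule sin_ge_cubic)
    finally show ?thesis .
  qed
  also have "sin \<alpha> = cos (2 * arctan t)"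
    unfolding \<alpha>_def by (simp add: cos_sin_eq)
  also have "\<dots> = (cos (arctan t))\<^sup>2 - (sin (arctan t))\<^sup>2"
    by (rule cos_double)
  also have "\<dots> = (1 - t\<^sup>2) / (1 + t\<^sup>2)"
    unfolding cos_arctan sin_arctan by (simp add: power_divide add_pos_nonneg diff_divide_distrib)
  finally show ?thesis .
qed

lemma two_Phi_minus_one_ge:
  assumes "0 < t" "t \<le> 1"
  shows "t\<^sup>2 / (1 + t\<^sup>2) \<le> 2 * Phi t - 1"
proof -
  define G where "G s = 3/10 * (s - s^3/6)" for s :: real
  have t_le: "-t \<le> t" using assms by simp
  have "((\<lambda>s. 3/10 * (1 - s\<^sup>2/2)) has_integral (G t - G (-t))) {-t..t}"
    unfolding G_def
    by (intro fundamental_theorem_of_calculus[OF t_le] has_field_derivative_at_within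
        [THEN has_real_derivative_iff_has_vector_derivative[THEN iffD1]])
      (auto intro!: derivative_eq_intros simp: eval_nat_numeral field_simps)
  then have "G t - G (-t) \<le> Phi t - Phi (-t)"
    by (rule has_integral_le[OF _ Phi_has_integral[OF t_le]]) (use std_normal_density_ge in simp)
  moreover have "t^3 \<le> t"
    using assms power_le_one[of t 2] by (simp add: power3_eq_cube power2_eq_square mult_left_le)
  then have "t/2 \<le> G t - G (-t)"
    unfolding G_def by (simp add: eval_nat_numeral field_simps)
  moreover have "t * (2 * t) \<le> t * (1 + t\<^sup>2)"
    using assms zero_le_power2[of "1 - t"]
    by (intro mult_left_mono) (auto simp: power2_eq_square algebra_simps)
  then have "t\<^sup>2 / (1 + t\<^sup>2) \<le> t/2"
    by (simp add: field_simps add_pos_nonneg power2_eq_square)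
  ultimately show ?thesis
    using Phi_uminus[of t] by linarith
qed

lemma continuous_at_right_le_SUP:
  fixes f h :: "real \<Rightarrow> real"
  assumes "continuous (at_right c) h" "eventually (\<lambda>x. h x \<le> f x) (at_right c)"
    and "bdd_above (range f)"
  shows "h c \<le> (SUP x. f x)"
proof (rule tendsto_upperbound[OF _ _ trivial_limit_at_right_real])
  show "(h \<longlongrightarrow> h c) (at_right c)"
    using assms(1) by (simp add: continuous_within)
  show "eventually (\<lambda>x. h x \<le> (SUP x. f x)) (at_right c)"
    using assms(2) by (rule eventually_mono) (meson assms(3) cSUP_upper UNIV_I order_trans)
qed

lemma (in real_distribution) SUP_abs_two_point_minus_cdf:
  assumes "u < v" "w\<^sub>1 + w\<^sub>2 = 1"
  shows "(SUP x. \<bar>(if u < x then w\<^sub>1 else 0) + (if v < x then w\<^sub>2 else 0) - cdf M x\<bar>) =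
    max (max (cdf M u) (w\<^sub>1 - cdf M u)) (max (cdf M v - w\<^sub>1) (1 - cdf M v))"
proof -
  define f where "f x = \<bar>(if u < x then w\<^sub>1 else 0) + (if v < x then w\<^sub>2 else 0) - cdf M x\<bar>" for x
  define m where "m = max (max (cdf M u) (w\<^sub>1 - cdf M u)) (max (cdf M v - w\<^sub>1) (1 - cdf M v))"
  have upper: "f x \<le> m" for x
    using cdf_nondecreasing[of x u] cdf_nondecreasing[of u x] cdf_nondecreasing[of x v]
      cdf_nondecreasing[of v x] cdf_nonneg[of x] cdf_bounded_prob[of x] assms
    unfolding f_def m_def by (cases "x \<le> u"; cases "x \<le> v") auto
  then have bdd: "bdd_above (range f)"
    by (intro bdd_aboveI2[where M = m])
  have "cdf M u \<le> f u" "cdf M v - w\<^sub>1 \<le> f v"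
    unfolding f_def using assms by auto
  moreover have "f u \<le> (SUP x. f x)" "f v \<le> (SUP x. f x)"
    using bdd by (auto intro: cSUP_upper)
  moreover have "w\<^sub>1 - cdf M u \<le> (SUP x. f x)"
  proof (rule continuous_at_right_le_SUP[OF _ _ bdd, where h = "\<lambda>x. w\<^sub>1 - cdf M x"])
    show "continuous (at_right u) (\<lambda>x. w\<^sub>1 - cdf M x)"
      by (intro continuous_intros cdf_is_right_cont)
    show "eventually (\<lambda>x. w\<^sub>1 - cdf M x \<le> f x) (at_right u)"
      using eventually_at_right_real[OF \<open>u < v\<close>] by eventually_elim (auto simp: f_def)
  qed
  moreover have "1 - cdf M v \<le> (SUP x. f x)"
  proof (rule continuous_at_right_le_SUP[OF _ _ bdd, where h = "\<lambda>x. 1 - cdf M x"])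
    show "continuous (at_right v) (\<lambda>x. 1 - cdf M x)"
      by (intro continuous_intros cdf_is_right_cont)
    show "eventually (\<lambda>x. 1 - cdf M x \<le> f x) (at_right v)"
      using eventually_at_right_less[of v] by eventually_elim (use assms in \<open>auto simp: f_def\<close>)
  qed
  ultimately have "m \<le> (SUP x. f x)"
    unfolding m_def by simp
  moreover have "(SUP x. f x) \<le> m"
    using upper by (intro cSUP_least) auto
  ultimately have "(SUP x. f x) = m"
    by (rule antisym[rotated])
  then show ?thesis
    unfolding f_def m_def .
qed

lemma (in prob_space) prob_less_two_point:
  fixes X :: "'a \<Rightarrow> real"
  assumes [measurable]: "X \<in> borel_measurable M" and "u \<noteq> v"
    and "prob {\<omega> \<in> space M. X \<omega> = u} + prob {\<omega> \<in> space M. X \<omega> = v} = 1"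
  shows "prob {\<omega> \<in> space M. X \<omega> < x} =
    (if u < x then prob {\<omega> \<in> space M. X \<omega> = u} else 0) +
    (if v < x then prob {\<omega> \<in> space M. X \<omega> = v} else 0)"
proof -
  define A where "A c = {\<omega> \<in> space M. X \<omega> = c}" for c
  have [measurable]: "A c \<in> events" for c
    unfolding A_def by measurable
  have "prob (A u \<union> A v) = 1"
    using assms by (subst finite_measure_Union) (auto simp: A_def)
  then have "AE \<omega> in M. \<omega> \<in> A u \<union> A v"
    by (rule AE_prob_1)
  then have "prob {\<omega> \<in> space M. X \<omega> < x} =
      prob ((if u < x then A u else {}) \<union> (if v < x then A v else {}))"
    by (intro measure_eq_AE) (auto simp: A_def)
  also have "\<dots> = (if u < x then prob (A u) else 0) + (if v < x then prob (A v) else 0)"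
    using \<open>u \<noteq> v\<close> by (subst finite_measure_Union) (auto simp: A_def)
  finally show ?thesis
    unfolding A_def .
qed

lemma Phi_sqrt_ratio_bounds:
  assumes "0 < p" "p \<le> q" "p + q = 1"
  shows "Phi (sqrt (q/p)) - Phi (sqrt (p/q)) \<le> q - p"
    and "p \<le> 2 * Phi (sqrt (p/q)) - 1"
    and "Phi (sqrt (p/q)) \<le> Phi (sqrt (q/p))"
proof -
  define t where "t = sqrt (p/q)"
  have "0 < t" "t \<le> 1"
    using assms unfolding t_def by auto
  have inverse_t: "sqrt (q/p) = 1/t"
    unfolding t_def by (simp add: real_sqrt_divide)
  have "t\<^sup>2 = p/q"
    unfolding t_def using assms by simp
  then have "p = q * t\<^sup>2"
    using assms by simp
  then have "q * (1 + t\<^sup>2) = 1"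
    using assms by (simp add: algebra_simps)
  then have q_eq: "q = 1 / (1 + t\<^sup>2)"
    by (intro eq_divide_imp) (simp_all add: add_nonneg_eq_0_iff)
  with \<open>p = q * t\<^sup>2\<close> have p_eq: "p = t\<^sup>2 / (1 + t\<^sup>2)"
    by simp
  have "Phi (1/t) - Phi t \<le> q - p"
    using Phi_inverse_minus_Phi_le[OF \<open>0 < t\<close> \<open>t \<le> 1\<close>]
    by (simp add: q_eq p_eq diff_divide_distrib)
  then show "Phi (sqrt (q/p)) - Phi (sqrt (p/q)) \<le> q - p"
    by (simp only: inverse_t t_def)
  have "p \<le> 2 * Phi t - 1"
    using two_Phi_minus_one_ge[OF \<open>0 < t\<close> \<open>t \<le> 1\<close>] by (simp add: p_eq)
  then show "p \<le> 2 * Phi (sqrt (p/q)) - 1"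
    by (simp only: t_def)
  have "Phi t \<le> Phi (1/t)"
    using \<open>0 < t\<close> \<open>t \<le> 1\<close> mult_le_one[of t t]
    by (intro Phi_mono) (simp add: field_simps)
  then show "Phi (sqrt (p/q)) \<le> Phi (sqrt (q/p))"
    by (simp only: inverse_t t_def)
qed

lemma max_two_point_normal_deviation:
  assumes "0 < p" "p < 1" "q = 1 - p"
  shows "max (max (Phi (- sqrt (p/q))) (q - Phi (- sqrt (p/q))))
      (max (Phi (sqrt (q/p)) - q) (1 - Phi (sqrt (q/p)))) =
    (if p < 1/2 then Phi (sqrt (p / q)) - p else Phi (sqrt (q / p)) - q)"
proof (cases "p < 1/2")
  case True
  then have "p \<le> q" using assms by simp
  from Phi_sqrt_ratio_bounds[OF \<open>0 < p\<close> this] show ?thesis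
    using True assms Phi_uminus[of "sqrt (p/q)"] by (simp add: max_def)
next
  case False
  then have "0 < q" "q \<le> p" using assms by simp_all
  from Phi_sqrt_ratio_bounds[OF this] show ?thesis
    using False assms Phi_uminus[of "sqrt (p/q)"] by (simp add: max_def)
qed

theorem theorem2:
  fixes M :: "'a measure" and X :: "'a \<Rightarrow> real" and p q :: real
  assumes "prob_space M"
    and "X \<in> borel_measurable M"
    and "0 < p" and "p < 1" and "q = 1 - p"
    and "measure M {\<omega> \<in> space M. X \<omega> = sqrt (q / p)} = p"
    and "measure M {\<omega> \<in> space M. X \<omega> = - sqrt (p / q)} = q"
  shows "(SUP x::real. \<bar>measure M {\<omega> \<in> space M. X \<omega> < x} - Phi x\<bar>) =
           (if p < 1/2 then Phi (sqrt (p / q)) - p else Phi (sqrt (q / p)) - q)"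
proof -
  interpret prob_space M by fact
  have "0 < sqrt (p/q)" "0 < sqrt (q/p)"
    using assms(3-5) by simp_all
  then have separated: "- sqrt (p/q) < sqrt (q/p)"
    by linarith
  have "measure M {\<omega> \<in> space M. X \<omega> < x} =
      (if - sqrt (p/q) < x then q else 0) + (if sqrt (q/p) < x then p else 0)" for x
    using prob_less_two_point[OF assms(2), of "sqrt (q/p)" "- sqrt (p/q)" x] separated assms(5-7)
    by (simp add: add.commute)
  then have "(SUP x::real. \<bar>measure M {\<omega> \<in> space M. X \<omega> < x} - Phi x\<bar>) =
      max (max (Phi (- sqrt (p/q))) (q - Phi (- sqrt (p/q))))
        (max (Phi (sqrt (q/p)) - q) (1 - Phi (sqrt (q/p))))"
    using std_normal.SUP_abs_two_point_minus_cdf[OF separated, of q p, folded Phi_def] assms(5)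
    by simp
  also have "\<dots> = (if p < 1/2 then Phi (sqrt (p / q)) - p else Phi (sqrt (q / p)) - q)"
    using assms(3-5) by (rule max_two_point_normal_deviation)
  finally show ?thesis .
qed

end
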